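(* Let $W$ be an irreducible finite Weyl group with (connected) Dynkin diagram $\Gamma$. For any nested set $\mathcal{N}$ on $\Gamma$, the element $w(\mathcal{N})=\prod_{J\in\mathcal{N}}w_0(J)$, with the product taken in a monotonic order of $\mathcal{N}$, is separable.
   Context: $\Phi$ is a finite crystallographic root system with simple roots $\Delta$, positive roots $\Phi^+$, Weyl group $W=W(\Phi)$; $I_\Phi(w)=\{\beta\in\Phi^+:w\beta\in-\Phi^+\}$. For $J\subseteq\Delta$, $W_J$ is the parabolic subgroup generated by $\{s_\alpha:\alpha\in J\}$ and $w_0(J)$ its longest element. Root poset: $\beta\leq\beta'$ iff $\beta'-\beta$ is a nonnegative combination of simple roots. $\Phi_J$ is the set of roots in the span of $J$; for a subsystem $\Phi'=\Phi\cap V$, $w|_{\Phi'}\in W(\Phi')$ is the element with inversion set $I_\Phi(w)\cap V$. $w$ is separable if (S1) $\Phi$ has type $A_1$; or (S2) $\Phi=\bigoplus\Phi_i$ is reducible and each $w|_{\Phi_i}$ is separable; or (S3) $\Phi$ is irreducible and some $\alpha_i\in\Delta$ has $w|_{\Phi_{\Delta\setminus\{\alpha_i\}}}$ separable and either $\{\beta\in\Phi^+:\beta\geq\alpha_i\}\subseteq I_\Phi(w)$ or this set is disjoint from $I_\Phi(w)$. The Dynkin diagram $\Gamma$ is the simple graph on $\Delta$ with an edge between $\alpha,\alpha'$ whenever $s_\alpha,s_{\alpha'}$ do not commute. A nested set on $\Gamma$ is a collection $\mathcal{N}$ of vertex subsets satisfying (N1) each $J\in\mathcal{N}$ induces a connected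 subgraph; (N2) any two elements are nested or disjoint; (N3) the union of any $k\geq2$ pairwise disjoint elements induces a disconnected subgraph. A total order on $\mathcal{N}$ is monotonic if $J$ comes after $I$ whenever $J\subseteq I$. *)

theory Defs
  imports "HOL-Analysis.Analysis"
begin

definition rrefl :: "'a::euclidean_space \<Rightarrow> 'a \<Rightarrow> 'a" where
  "rrefl a x = x - (2 * (x \<bullet> a) / (a \<bullet> a)) *\<^sub>R a"

definition root_system :: "'a::euclidean_space set \<Rightarrow> bool" where
  "root_system \<Phi> \<longleftrightarrow> finite \<Phi> \<and> 0 \<notin> \<Phi>
     \<and> (\<forall>a\<in>\<Phi>. \<forall>b\<in>\<Phi>. rrefl a b \<in> \<Phi>)
     \<and> (\<forall>a\<in>\<Phi>. \<forall>b\<in>\<Phi>. 2 * (b \<bullet> a) / (a \<bullet> a) \<in> \<int>)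
     \<and> (\<forall>a\<in>\<Phi>. \<forall>c::real. c *\<^sub>R a \<in> \<Phi> \<longrightarrow> c = 1 \<or> c = -1)"

definition is_base :: "'a::euclidean_space set \<Rightarrow> 'a set \<Rightarrow> bool" where
  "is_base \<Phi> \<Delta> \<longleftrightarrow> \<Delta> \<subseteq> \<Phi> \<and> independent \<Delta>
     \<and> (\<forall>b\<in>\<Phi>. \<exists>c. (\<forall>a\<in>\<Delta>. c a \<in> \<int>)
            \<and> ((\<forall>a\<in>\<Delta>. c a \<ge> 0) \<or> (\<forall>a\<in>\<Delta>. c a \<le> 0))
            \<and> b = (\<Sum>a\<in>\<Delta>. c a *\<^sub>R a))"

definition nonneg_comb :: "'a::euclidean_space set \<Rightarrow> 'a \<Rightarrow> bool" where
  "nonneg_comb \<Delta> v \<longleftrightarrow> (\<exists>c. (\<forall>a\<in>\<Delta>. c a \<ge> 0) \<and> v = (\<Sum>a\<in>\<Delta>. c a *\<^sub>R a))"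

definition pos_roots :: "'a::euclidean_space set \<Rightarrow> 'a set \<Rightarrow> 'a set" where
  "pos_roots \<Phi> \<Delta> = {b \<in> \<Phi>. nonneg_comb \<Delta> b}"

definition root_le :: "'a::euclidean_space set \<Rightarrow> 'a \<Rightarrow> 'a \<Rightarrow> bool" where
  "root_le \<Delta> b b' \<longleftrightarrow> nonneg_comb \<Delta> (b' - b)"

definition inv_set :: "'a::euclidean_space set \<Rightarrow> 'a set \<Rightarrow> ('a \<Rightarrow> 'a) \<Rightarrow> 'a set" where
  "inv_set \<Phi> \<Delta> w = {b \<in> pos_roots \<Phi> \<Delta>. - (w b) \<in> pos_roots \<Phi> \<Delta>}"

definition dyn_edge :: "'a::euclidean_space \<Rightarrow> 'a \<Rightarrow> bool" where
  "dyn_edge a b \<longleftrightarrow> a \<noteq> b \<and> rrefl a \<circ> rrefl b \<noteq> rrefl b \<circ> rrefl a"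

definition dyn_connected :: "'a::euclidean_space set \<Rightarrow> bool" where
  "dyn_connected S \<longleftrightarrow> S \<noteq> {} \<and>
     (\<forall>x\<in>S. \<forall>y\<in>S. (x, y) \<in> {(a, b). a \<in> S \<and> b \<in> S \<and> dyn_edge a b}\<^sup>*)"

definition dyn_components :: "'a::euclidean_space set \<Rightarrow> 'a set set" where
  "dyn_components D = {C. C \<subseteq> D \<and> dyn_connected C \<and>
      (\<forall>E. C \<subseteq> E \<and> E \<subseteq> D \<and> dyn_connected E \<longrightarrow> E = C)}"

text \<open>sep_set Phi Delta N: the element of W(Phi) whose inversion set is N is separable.
  Restrictions to parabolic subsystems Phi cap span J (with simple roots J) are
  encoded by intersecting the inversion set with span J.\<close>
inductive sep_set :: "'a::euclidean_space set \<Rightarrow> 'a set \<Rightarrow> 'a set \<Rightarrow> bool" where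
  S1: "card \<Delta> = 1 \<Longrightarrow> sep_set \<Phi> \<Delta> N"
| S2: "\<Delta> \<noteq> {} \<Longrightarrow> \<not> dyn_connected \<Delta> \<Longrightarrow>
       (\<forall>C\<in>dyn_components \<Delta>. sep_set (\<Phi> \<inter> span C) C (N \<inter> span C)) \<Longrightarrow>
       sep_set \<Phi> \<Delta> N"
| S3: "dyn_connected \<Delta> \<Longrightarrow> a \<in> \<Delta> \<Longrightarrow>
       sep_set (\<Phi> \<inter> span (\<Delta> - {a})) (\<Delta> - {a}) (N \<inter> span (\<Delta> - {a})) \<Longrightarrow>
       ({b \<in> pos_roots \<Phi> \<Delta>. root_le \<Delta> a b} \<subseteq> N \<or>
        {b \<in> pos_roots \<Phi> \<Delta>. root_le \<Delta> a b} \<inter> N = {}) \<Longrightarrow>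
       sep_set \<Phi> \<Delta> N"

definition separable :: "'a::euclidean_space set \<Rightarrow> 'a set \<Rightarrow> ('a \<Rightarrow> 'a) \<Rightarrow> bool" where
  "separable \<Phi> \<Delta> w \<longleftrightarrow> sep_set \<Phi> \<Delta> (inv_set \<Phi> \<Delta> w)"

definition weyl_word :: "'a::euclidean_space list \<Rightarrow> 'a \<Rightarrow> 'a" where
  "weyl_word xs = foldr (\<lambda>a f. rrefl a \<circ> f) xs id"

definition parabolic :: "'a::euclidean_space set \<Rightarrow> ('a \<Rightarrow> 'a) set" where
  "parabolic J = {weyl_word xs | xs. set xs \<subseteq> J}"

definition cox_length :: "'a::euclidean_space set \<Rightarrow> ('a \<Rightarrow> 'a) \<Rightarrow> nat" where
  "cox_length J w = (LEAST n. \<exists>xs. set xs \<subseteq> J \<and> length xs = n \<and> weyl_word xs = w)"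

definition longest :: "'a::euclidean_space set \<Rightarrow> 'a \<Rightarrow> 'a" where
  "longest J = (THE w. w \<in> parabolic J \<and> (\<forall>v\<in>parabolic J. cox_length J v \<le> cox_length J w))"

definition nested_set :: "'a::euclidean_space set \<Rightarrow> 'a set set \<Rightarrow> bool" where
  "nested_set \<Delta> \<N> \<longleftrightarrow>
     (\<forall>J\<in>\<N>. J \<subseteq> \<Delta> \<and> dyn_connected J)
   \<and> (\<forall>I\<in>\<N>. \<forall>J\<in>\<N>. I \<subseteq> J \<or> J \<subseteq> I \<or> I \<inter> J = {})
   \<and> (\<forall>K \<subseteq> \<N>. 2 \<le> card K \<and> (\<forall>I\<in>K. \<forall>J\<in>K. I \<noteq> J \<longrightarrow> I \<inter> J = {})
        \<longrightarrow> \<not> dyn_connected (\<Union>K))"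

definition monotonic_order :: "'a set list \<Rightarrow> 'a set set \<Rightarrow> bool" where
  "monotonic_order Js \<N> \<longleftrightarrow> distinct Js \<and> set Js = \<N> \<and>
     (\<forall>i < length Js. \<forall>j < length Js. i \<noteq> j \<and> Js ! j \<subseteq> Js ! i \<longrightarrow> i < j)"

definition nested_product :: "'a::euclidean_space set list \<Rightarrow> 'a \<Rightarrow> 'a" where
  "nested_product Js = foldr (\<lambda>J f. longest J \<circ> f) Js id"

end

theory Submission
  imports Defs
begin

text \<open>
  Induction on the rank. If the Dynkin diagram of \<open>E\<close> is disconnected, simple roots in
  different components are orthogonal, so a factor \<open>w\<^sub>0(J)\<close> with \<open>J\<close> outside a component \<open>C\<close>
  fixes \<open>span C\<close> pointwise; on \<open>span C\<close> the element acts as the product over the members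
  inside \<open>C\<close>. If \<open>E\<close> is connected, the maximal members of \<open>\<N> - {E}\<close> are pairwise disjoint
  and, by (N3), cannot cover \<open>E\<close>; pick a vertex \<open>a\<close> in none of them. The product \<open>w'\<close> over
  \<open>\<N> - {E}\<close> lies in \<open>W\<^bsub>E-{a}\<^esub>\<close>, so it preserves the \<open>a\<close>-coordinate of every root and
  inverts no root \<open>\<ge> a\<close>. If \<open>E \<notin> \<N>\<close> the element is \<open>w'\<close> and (S3) applies. Otherwise it is
  \<open>w\<^sub>0(E) w'\<close>; as \<open>w\<^sub>0(E)\<close> negates every positive root of \<open>span E\<close>, it inverts every root
  \<open>\<ge> a\<close> and, inside \<open>span (E - {a})\<close>, exactly the positive roots not inverted by \<open>w'\<close>, and
  separability survives this complementation. The needed property of \<open>w\<^sub>0(J)\<close> comes from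
  \<open>\<ell>(w) = |I(w)|\<close>, which follows from the deletion condition.
\<close>

section \<open>Reflections and words in simple reflections\<close>

lemma linear_rrefl: "linear (rrefl a)"
  unfolding rrefl_def
  by (rule linearI) (simp_all add: add_divide_distrib algebra_simps)

lemma rrefl_inner: "a \<noteq> 0 \<Longrightarrow> rrefl a x \<bullet> rrefl a y = x \<bullet> y"
  unfolding rrefl_def
  by (simp add: inner_diff_left inner_diff_right inner_commute field_simps power2_eq_square)

lemma rrefl_self: "a \<noteq> 0 \<Longrightarrow> rrefl a a = - a"
  by (simp add: rrefl_def scaleR_2)

lemma rrefl_fixes_orthogonal: "x \<bullet> a = 0 \<Longrightarrow> rrefl a x = x"
  by (simp add: rrefl_def)

lemma rrefl_rrefl:
  assumes "a \<noteq> 0"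
  shows "rrefl a (rrefl a x) = x"
proof -
  have "rrefl a x \<bullet> a = - (x \<bullet> a)"
    using rrefl_inner[OF assms, of x a] rrefl_self[OF assms] by simp
  then show ?thesis
    by (simp add: rrefl_def)
qed

lemma rrefl_minus_in_span: "rrefl a x - x \<in> span {a}"
  unfolding rrefl_def by (simp add: span_base span_scale span_neg)

lemma rrefl_conjugate:
  assumes "linear w" "\<And>x y. w x \<bullet> w y = x \<bullet> y"
  shows "w (rrefl a x) = rrefl (w a) (w x)"
  unfolding rrefl_def using assms by (simp add: linear_diff linear_scale)

lemma weyl_word_Nil [simp]: "weyl_word [] = id"
  by (simp add: weyl_word_def)

lemma weyl_word_Cons: "weyl_word (a # xs) = rrefl a \<circ> weyl_word xs"
  by (simp add: weyl_word_def)

lemma weyl_word_Cons_apply: "weyl_word (a # xs) x = rrefl a (weyl_word xs x)"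
  by (simp add: weyl_word_def)

lemma weyl_word_append: "weyl_word (xs @ ys) = weyl_word xs \<circ> weyl_word ys"
  by (induction xs) (simp_all add: weyl_word_Cons o_assoc)

lemma weyl_word_snoc_apply: "weyl_word (xs @ [a]) x = weyl_word xs (rrefl a x)"
  by (simp add: weyl_word_append weyl_word_Cons)

lemma linear_weyl_word: "linear (weyl_word xs)"
proof (induction xs)
  case (Cons a xs)
  then show ?case
    unfolding weyl_word_Cons by (rule linear_compose[OF _ linear_rrefl])
qed (simp only: weyl_word_Nil linear_id)

lemma weyl_word_uminus: "weyl_word xs (- x) = - weyl_word xs x"
  using linear_weyl_word by (rule linear_neg)

lemma weyl_word_inner: "0 \<notin> set xs \<Longrightarrow> weyl_word xs x \<bullet> weyl_word xs y = x \<bullet> y"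
  by (induction xs) (auto simp: weyl_word_Cons_apply rrefl_inner)

lemma weyl_word_rev_inverse: "0 \<notin> set xs \<Longrightarrow> weyl_word xs (weyl_word (rev xs) x) = x"
  by (induction xs arbitrary: x rule: rev_induct) (auto simp: weyl_word_Cons_apply weyl_word_snoc_apply rrefl_rrefl)

lemma weyl_word_minus_in_span: "set xs \<subseteq> K \<Longrightarrow> weyl_word xs x - x \<in> span K"
proof (induction xs)
  case (Cons a xs)
  have "rrefl a (weyl_word xs x) - weyl_word xs x \<in> span K"
    using rrefl_minus_in_span span_mono[of "{a}" K] Cons.prems by auto
  moreover have "weyl_word xs x - x \<in> span K"
    using Cons by simp
  ultimately show ?case
    unfolding weyl_word_Cons_apply by (metis span_add diff_add_cancel add_diff_eq)
qed (simp add: span_zero)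

lemma weyl_word_in_span: "set xs \<subseteq> K \<Longrightarrow> x \<in> span K \<Longrightarrow> weyl_word xs x \<in> span K"
  by (metis weyl_word_minus_in_span span_add diff_add_cancel)

lemma weyl_word_fixes_orthogonal: "set xs \<subseteq> K \<Longrightarrow> (\<forall>a\<in>K. x \<bullet> a = 0) \<Longrightarrow> weyl_word xs x = x"
  by (induction xs) (auto simp: weyl_word_Cons_apply rrefl_fixes_orthogonal)

lemma weyl_word_in_parabolic: "set xs \<subseteq> J \<Longrightarrow> weyl_word xs \<in> parabolic J"
  unfolding parabolic_def by blast

lemma id_in_parabolic: "id \<in> parabolic J"
  using weyl_word_in_parabolic[of "[]"] by simp

lemma cox_length_le: "set xs \<subseteq> J \<Longrightarrow> cox_length J (weyl_word xs) \<le> length xs"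
  unfolding cox_length_def by (rule Least_le) blast

lemma cox_length_attained:
  assumes "w \<in> parabolic J"
  obtains xs where "set xs \<subseteq> J" "length xs = cox_length J w" "weyl_word xs = w"
proof -
  have "\<exists>n xs. set xs \<subseteq> J \<and> length xs = n \<and> weyl_word xs = w"
    using assms unfolding parabolic_def by blast
  from LeastI_ex[OF this] show ?thesis
    using that unfolding cox_length_def by blast
qed

lemma reduced_word_butlast:
  assumes "set (xs @ [a]) \<subseteq> J" "length (xs @ [a]) = cox_length J (weyl_word (xs @ [a]))"
  shows "length xs = cox_length J (weyl_word xs)"
proof (rule ccontr)
  assume "length xs \<noteq> cox_length J (weyl_word xs)"
  then have "cox_length J (weyl_word xs) < length xs"
    using cox_length_le[of xs J] assms(1) by simp
  moreover obtain ys where "set ys \<subseteq> J" "length ys = cox_length J (weyl_word xs)"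
      "weyl_word ys = weyl_word xs"
    using cox_length_attained[of "weyl_word xs" J] assms(1) weyl_word_in_parabolic by auto
  then have "cox_length J (weyl_word (xs @ [a])) \<le> cox_length J (weyl_word xs) + 1"
    using cox_length_le[of "ys @ [a]" J] assms(1) by (simp add: weyl_word_append)
  ultimately show False
    using assms(2) by simp
qed

section \<open>Dynkin diagrams, monotonic orders and nested sets\<close>

definition dyn_edges :: "'a::euclidean_space set \<Rightarrow> ('a \<times> 'a) set" where
  "dyn_edges S = {(a, b). a \<in> S \<and> b \<in> S \<and> dyn_edge a b}"

lemma sym_dyn_edges: "sym (dyn_edges S)"
  unfolding dyn_edges_def dyn_edge_def sym_def by auto

lemma dyn_connected_iff: "dyn_connected S \<longleftrightarrow> S \<noteq> {} \<and> (\<forall>x\<in>S. \<forall>y\<in>S. (x, y) \<in> (dyn_edges S)\<^sup>*)"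
  unfolding dyn_connected_def dyn_edges_def by simp

lemma dyn_components_subset: "C \<in> dyn_components D \<Longrightarrow> C \<subseteq> D"
  unfolding dyn_components_def by blast

lemma dyn_connected_Un:
  assumes A: "dyn_connected A" and B: "dyn_connected B"
    and link: "x0 \<in> A" "y0 \<in> B" "x0 = y0 \<or> dyn_edge x0 y0"
  shows "dyn_connected (A \<union> B)"
proof -
  let ?R = "(dyn_edges (A \<union> B))\<^sup>*"
  have "dyn_edges A \<subseteq> dyn_edges (A \<union> B)" "dyn_edges B \<subseteq> dyn_edges (A \<union> B)"
    unfolding dyn_edges_def by auto
  then have "(x, y) \<in> ?R" if "x \<in> A \<and> y \<in> A \<or> x \<in> B \<and> y \<in> B" for x y
    using that A B rtrancl_mono unfolding dyn_connected_iff by blast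
  moreover have "(x0, y0) \<in> ?R"
    using link unfolding dyn_edges_def by auto
  moreover have "sym ?R"
    using sym_dyn_edges by (rule sym_rtrancl)
  ultimately have "(x, y) \<in> ?R" if "x \<in> A \<union> B" "y \<in> A \<union> B" for x y
    using that link(1,2) by (metis UnE rtrancl_trans symD)
  then show ?thesis
    using A unfolding dyn_connected_iff by blast
qed

lemma dyn_components_psubset:
  assumes "C \<in> dyn_components D" "\<not> dyn_connected D"
  shows "C \<subset> D" "C \<noteq> {}"
proof -
  have "C \<subseteq> D" "dyn_connected C"
    using assms(1) unfolding dyn_components_def by auto
  then show "C \<subset> D" "C \<noteq> {}"
    using assms(2) unfolding dyn_connected_def by auto
qed

lemma dyn_components_absorb:
  assumes C: "C \<in> dyn_components D" and J: "J \<subseteq> D" "dyn_connected J"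
    and link: "x0 \<in> J" "y0 \<in> C" "x0 = y0 \<or> dyn_edge x0 y0"
  shows "J \<subseteq> C"
proof -
  have "dyn_connected C" "C \<subseteq> D"
    using C unfolding dyn_components_def by auto
  then have "dyn_connected (J \<union> C)" "J \<union> C \<subseteq> D"
    using dyn_connected_Un[OF J(2) _ link] J(1) by auto
  then have "J \<union> C = C"
    using C unfolding dyn_components_def by blast
  then show ?thesis
    by blast
qed

lemma all_index_pairs_ordered_iff:
  "(\<forall>i<n. \<forall>j<n. i \<noteq> j \<and> P j i \<longrightarrow> i < j) \<longleftrightarrow> (\<forall>i j. i < j \<longrightarrow> j < n \<longrightarrow> \<not> P i j)"
  for n :: nat
proof (intro iffI allI impI)
  fix i j
  assume H: "\<forall>i<n. \<forall>j<n. i \<noteq> j \<and> P j i \<longrightarrow> i < j" and ij: "i < j" "j < n"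
  show "\<not> P i j"
  proof
    assume "P i j"
    then have "j < i"
      using H ij by auto
    then show False
      using ij by simp
  qed
next
  fix i j
  assume H: "\<forall>i j. i < j \<longrightarrow> j < n \<longrightarrow> \<not> P i j" and ij: "i < n" "j < n" "i \<noteq> j \<and> P j i"
  show "i < j"
  proof (rule ccontr)
    assume "\<not> i < j"
    then have "j < i"
      using ij by simp
    then show False
      using H ij by blast
  qed
qed

lemma monotonic_order_iff_sorted:
  "monotonic_order Js N \<longleftrightarrow> distinct Js \<and> set Js = N \<and> sorted_wrt (\<lambda>I J. \<not> I \<subseteq> J) Js"
  unfolding monotonic_order_def sorted_wrt_iff_nth_less
    all_index_pairs_ordered_iff[where P = "\<lambda>i j. Js ! i \<subseteq> Js ! j"] ..

lemma monotonic_order_set: "monotonic_order Js N \<Longrightarrow> set Js = N"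
  unfolding monotonic_order_def by blast

lemma monotonic_order_filter: "monotonic_order Js N \<Longrightarrow> monotonic_order (filter P Js) {J \<in> N. P J}"
  unfolding monotonic_order_iff_sorted by (auto simp: sorted_wrt_filter)

lemma monotonic_order_Cons: "monotonic_order (D # Js) N \<Longrightarrow> monotonic_order Js (N - {D})"
  unfolding monotonic_order_iff_sorted by auto

lemma monotonic_order_hd:
  assumes "monotonic_order Js N" "D \<in> N" "\<forall>J\<in>N. J \<subseteq> D"
  obtains Js' where "Js = D # Js'"
proof -
  obtain xs ys where Js: "Js = xs @ D # ys"
    using assms(1,2) split_list unfolding monotonic_order_def by metis
  have "xs = []"
  proof (cases xs)
    case (Cons I xs')
    then have "\<not> I \<subseteq> D"
      using assms(1) Js unfolding monotonic_order_iff_sorted by (simp add: sorted_wrt_append)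
    moreover have "I \<in> N"
      using assms(1) Js Cons unfolding monotonic_order_iff_sorted by auto
    ultimately show ?thesis
      using assms(3) by blast
  qed
  then show ?thesis
    using Js that by simp
qed

lemma nested_set_member: "nested_set D N \<Longrightarrow> J \<in> N \<Longrightarrow> J \<subseteq> D \<and> dyn_connected J"
  unfolding nested_set_def by (elim conjE) (rule bspec)

lemma nested_set_nested:
  assumes "nested_set D N" "I \<in> N" "J \<in> N"
  shows "I \<subseteq> J \<or> J \<subseteq> I \<or> I \<inter> J = {}"
proof -
  have "\<forall>I\<in>N. \<forall>J\<in>N. I \<subseteq> J \<or> J \<subseteq> I \<or> I \<inter> J = {}"
    using assms(1) unfolding nested_set_def by argo
  then show ?thesis
    using assms(2,3) by blast
qed

lemma nested_set_disjoint_Union_not_connected: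
  assumes "nested_set D N" "K \<subseteq> N" "2 \<le> card K" "\<forall>I\<in>K. \<forall>J\<in>K. I \<noteq> J \<longrightarrow> I \<inter> J = {}"
  shows "\<not> dyn_connected (\<Union>K)"
proof -
  have "\<forall>K \<subseteq> N. 2 \<le> card K \<and> (\<forall>I\<in>K. \<forall>J\<in>K. I \<noteq> J \<longrightarrow> I \<inter> J = {}) \<longrightarrow> \<not> dyn_connected (\<Union>K)"
    using assms(1) unfolding nested_set_def by argo
  then show ?thesis
    using assms(2-4) by blast
qed

lemma finite_nested_set:
  assumes "finite D" "nested_set D N"
  shows "finite N"
proof -
  have "N \<subseteq> Pow D"
    using nested_set_member[OF assms(2)] by blast
  then show ?thesis
    using assms(1) finite_subset by blast
qed

lemma nested_set_subfamily:
  assumes "nested_set D N" "N' \<subseteq> N" "\<forall>J\<in>N'. J \<subseteq> D'"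
  shows "nested_set D' N'"
  using assms unfolding nested_set_def by (meson subset_trans subsetD)

definition maximal_members :: "'a set set \<Rightarrow> 'a set set" where
  "maximal_members N = {J \<in> N. \<forall>I\<in>N. J \<subseteq> I \<longrightarrow> I = J}"

lemma maximal_members_subset: "maximal_members N \<subseteq> N"
  unfolding maximal_members_def by blast

lemma Union_maximal_members:
  assumes "finite N"
  shows "\<Union>(maximal_members N) = \<Union>N"
proof
  show "\<Union>(maximal_members N) \<subseteq> \<Union>N"
    using maximal_members_subset by blast
  show "\<Union>N \<subseteq> \<Union>(maximal_members N)"
  proof
    fix x
    assume "x \<in> \<Union>N"
    then obtain J where J: "J \<in> N" "x \<in> J"
      by blast
    obtain I where "I \<in> N" "J \<subseteq> I" "\<forall>I'\<in>N. I \<subseteq> I' \<longrightarrow> I = I'"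
      using finite_has_maximal2[OF assms J(1)] by blast
    then have "I \<in> maximal_members N"
      unfolding maximal_members_def by auto
    with J(2) \<open>J \<subseteq> I\<close> show "x \<in> \<Union>(maximal_members N)"
      by blast
  qed
qed

lemma maximal_members_disjoint:
  assumes "nested_set D N" "I \<in> maximal_members N" "J \<in> maximal_members N" "I \<noteq> J"
  shows "I \<inter> J = {}"
proof -
  have "\<not> I \<subseteq> J" "\<not> J \<subseteq> I"
    using assms(2-4) unfolding maximal_members_def by auto
  moreover have "I \<in> N" "J \<in> N"
    using assms(2,3) maximal_members_subset by blast+
  ultimately show ?thesis
    using nested_set_nested[OF assms(1)] by blast
qed

text \<open>By (N3) the pairwise disjoint maximal members cannot cover a connected \<open>D\<close>, unless there
  is only one of them, which is then \<open>D\<close> itself.\<close>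
lemma nested_set_Union_psubset:
  assumes fin: "finite D" and con: "dyn_connected D" and ns: "nested_set D N" and "D \<notin> N"
  shows "\<Union>N \<subset> D"
proof -
  have "\<Union>N \<subseteq> D"
    using nested_set_member[OF ns] by blast
  have "finite N"
    using finite_nested_set[OF fin ns] .
  let ?M = "maximal_members N"
  note M = maximal_members_subset[of N] finite_subset[OF maximal_members_subset \<open>finite N\<close>]
    Union_maximal_members[OF \<open>finite N\<close>]
  have "\<Union>N \<noteq> D"
  proof
    assume "\<Union>N = D"
    consider "card ?M = 0" | "card ?M = 1" | "2 \<le> card ?M"
      by linarith
    then show False
    proof cases
      case 1
      then show False
        using M \<open>\<Union>N = D\<close> con unfolding dyn_connected_def by simp
    next
      case 2
      then obtain J where "?M = {J}"
        by (rule card_1_singletonE)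
      then show False
        using M \<open>\<Union>N = D\<close> \<open>D \<notin> N\<close> by auto
    next
      case 3
      have "\<forall>I\<in>?M. \<forall>J\<in>?M. I \<noteq> J \<longrightarrow> I \<inter> J = {}"
        using maximal_members_disjoint[OF ns] by blast
      then have "\<not> dyn_connected (\<Union>?M)"
        using nested_set_disjoint_Union_not_connected[OF ns M(1) 3] by blast
      then show False
        using M \<open>\<Union>N = D\<close> con by simp
    qed
  qed
  with \<open>\<Union>N \<subseteq> D\<close> show ?thesis
    by blast
qed

lemma nested_set_remove_uncovered:
  assumes "finite D" "dyn_connected D" "nested_set D N" "D \<notin> N"
  obtains a where "a \<in> D" "nested_set (D - {a}) N"
proof -
  obtain a where "a \<in> D" "a \<notin> \<Union>N"
    using nested_set_Union_psubset[OF assms] by blast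
  moreover have "\<forall>J\<in>N. J \<subseteq> D"
    using nested_set_member[OF assms(3)] by blast
  ultimately have "\<forall>J\<in>N. J \<subseteq> D - {a}"
    by blast
  then have "nested_set (D - {a}) N"
    by (rule nested_set_subfamily[OF assms(3) order_refl])
  with \<open>a \<in> D\<close> show ?thesis
    by (rule that)
qed

lemma nested_set_remove_top:
  assumes fin: "finite D" and con: "dyn_connected D" and ns: "nested_set D N"
    and mo: "monotonic_order Js N" and "D \<in> N"
  obtains a Js' where "a \<in> D" "Js = D # Js'" "nested_set (D - {a}) (N - {D})"
    "monotonic_order Js' (N - {D})"
proof -
  have "\<forall>J\<in>N. J \<subseteq> D"
    using nested_set_member[OF ns] by blast
  then obtain Js' where Js: "Js = D # Js'"
    using monotonic_order_hd[OF mo \<open>D \<in> N\<close>] by blast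
  have "nested_set D (N - {D})"
    using ns by (rule nested_set_subfamily) (use \<open>\<forall>J\<in>N. J \<subseteq> D\<close> in auto)
  then obtain a where "a \<in> D" "nested_set (D - {a}) (N - {D})"
    using nested_set_remove_uncovered[OF fin con] by blast
  moreover have "monotonic_order Js' (N - {D})"
    using mo unfolding Js by (rule monotonic_order_Cons)
  ultimately show ?thesis
    using that Js by blast
qed

lemma nested_product_Nil [simp]: "nested_product [] = id"
  by (simp add: nested_product_def)

lemma nested_product_Cons: "nested_product (J # Js) = longest J \<circ> nested_product Js"
  by (simp add: nested_product_def)

section \<open>Separability\<close>

lemma pos_roots_subset_span: "pos_roots \<Phi> D \<subseteq> \<Phi> \<inter> span D"
  unfolding pos_roots_def nonneg_comb_def by (auto intro: span_sum span_scale span_base)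

lemma sep_set_cong:
  "sep_set \<Phi> D N \<Longrightarrow> N' \<inter> \<Phi> \<inter> span D = N \<inter> \<Phi> \<inter> span D \<Longrightarrow> sep_set \<Phi> D N'"
proof (induction arbitrary: N' rule: sep_set.induct)
  case (S1 \<Delta> \<Phi> N)
  show ?case
    using S1.hyps by (rule sep_set.S1)
next
  case (S2 \<Delta> \<Phi> N)
  show ?case
  proof (rule sep_set.S2[OF S2(1,2)], rule ballI)
    fix C
    assume C: "C \<in> dyn_components \<Delta>"
    then have "span C \<subseteq> span \<Delta>"
      using dyn_components_subset span_mono by blast
    then have "(N' \<inter> span C) \<inter> (\<Phi> \<inter> span C) \<inter> span C = (N \<inter> span C) \<inter> (\<Phi> \<inter> span C) \<inter> span C"
      using S2.prems by blast
    then show "sep_set (\<Phi> \<inter> span C) C (N' \<inter> span C)"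
      using S2.IH C by blast
  qed
next
  case (S3 \<Delta> a \<Phi> N)
  let ?U = "{b \<in> pos_roots \<Phi> \<Delta>. root_le \<Delta> a b}"
  have "span (\<Delta> - {a}) \<subseteq> span \<Delta>"
    by (rule span_mono) blast
  then have "(N' \<inter> span (\<Delta> - {a})) \<inter> (\<Phi> \<inter> span (\<Delta> - {a})) \<inter> span (\<Delta> - {a})
      = (N \<inter> span (\<Delta> - {a})) \<inter> (\<Phi> \<inter> span (\<Delta> - {a})) \<inter> span (\<Delta> - {a})"
    using S3.prems by blast
  then have "sep_set (\<Phi> \<inter> span (\<Delta> - {a})) (\<Delta> - {a}) (N' \<inter> span (\<Delta> - {a}))"
    by (rule S3.IH)
  moreover have "?U \<subseteq> \<Phi> \<inter> span \<Delta>"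
    using pos_roots_subset_span by blast
  then have "?U \<inter> N' = ?U \<inter> N"
    using S3.prems by blast
  then have "?U \<subseteq> N' \<or> ?U \<inter> N' = {}"
    using S3.hyps(4) by blast
  ultimately show ?case
    by (rule sep_set.S3[OF S3.hyps(1,2)])
qed

lemma sep_set_complement:
  "sep_set \<Phi> D N \<Longrightarrow> (\<forall>C\<subseteq>D. pos_roots \<Phi> C \<subseteq> X) \<Longrightarrow> sep_set \<Phi> D (X - N)"
proof (induction rule: sep_set.induct)
  case (S1 \<Delta> \<Phi> N)
  show ?case
    using S1.hyps by (rule sep_set.S1)
next
  case (S2 \<Delta> \<Phi> N)
  show ?case
  proof (rule sep_set.S2[OF S2(1,2)], rule ballI)
    fix C
    assume C: "C \<in> dyn_components \<Delta>"
    then have "\<forall>C'\<subseteq>C. pos_roots (\<Phi> \<inter> span C) C' \<subseteq> X"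
      using S2.prems dyn_components_subset unfolding pos_roots_def by blast
    then have "sep_set (\<Phi> \<inter> span C) C (X - N \<inter> span C)"
      using S2.IH C by blast
    then show "sep_set (\<Phi> \<inter> span C) C ((X - N) \<inter> span C)"
      by (rule sep_set_cong) blast
  qed
next
  case (S3 \<Delta> a \<Phi> N)
  let ?U = "{b \<in> pos_roots \<Phi> \<Delta>. root_le \<Delta> a b}"
  have "\<forall>C\<subseteq>\<Delta> - {a}. pos_roots (\<Phi> \<inter> span (\<Delta> - {a})) C \<subseteq> X"
    using S3.prems unfolding pos_roots_def by blast
  then have "sep_set (\<Phi> \<inter> span (\<Delta> - {a})) (\<Delta> - {a}) (X - N \<inter> span (\<Delta> - {a}))"
    by (rule S3.IH)
  then have "sep_set (\<Phi> \<inter> span (\<Delta> - {a})) (\<Delta> - {a}) ((X - N) \<inter> span (\<Delta> - {a}))"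
    by (rule sep_set_cong) blast
  moreover have "?U \<subseteq> X"
    using S3.prems by blast
  then have "?U \<subseteq> X - N \<or> ?U \<inter> (X - N) = {}"
    using S3.hyps(4) by blast
  ultimately show ?case
    by (rule sep_set.S3[OF S3.hyps(1,2)])
qed

section \<open>Root systems with a base\<close>

locale root_base =
  fixes \<Phi> \<Delta> :: "'a::euclidean_space set"
  assumes root_system: "root_system \<Phi>" and base: "is_base \<Phi> \<Delta>"
begin

abbreviation Pos :: "'a set" where "Pos \<equiv> pos_roots \<Phi> \<Delta>"
abbreviation Inv :: "('a \<Rightarrow> 'a) \<Rightarrow> 'a set" where "Inv w \<equiv> inv_set \<Phi> \<Delta> w"
abbreviation coord :: "'a \<Rightarrow> 'a \<Rightarrow> real" where "coord x \<equiv> representation \<Delta> x"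

lemma independent_base: "independent \<Delta>"
  using base unfolding is_base_def by blast

lemma finite_base: "finite \<Delta>"
  using independent_base by (rule eucl.finiteI_independent)

lemma base_subset_roots: "\<Delta> \<subseteq> \<Phi>"
  using base unfolding is_base_def by blast

lemma finite_roots: "finite \<Phi>"
  using root_system unfolding root_system_def by blast

lemma zero_notin_roots: "0 \<notin> \<Phi>"
  using root_system unfolding root_system_def by blast

lemma zero_notin_base: "0 \<notin> \<Delta>"
  using base_subset_roots zero_notin_roots by blast

lemma rrefl_in_roots: "a \<in> \<Phi> \<Longrightarrow> b \<in> \<Phi> \<Longrightarrow> rrefl a b \<in> \<Phi>"
  using root_system unfolding root_system_def by blast

lemma roots_reduced: "a \<in> \<Phi> \<Longrightarrow> c *\<^sub>R a \<in> \<Phi> \<Longrightarrow> c = 1 \<or> c = -1"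
  using root_system unfolding root_system_def by blast

lemma uminus_in_roots:
  assumes "a \<in> \<Phi>"
  shows "- a \<in> \<Phi>"
proof -
  have "a \<noteq> 0"
    using assms zero_notin_roots by blast
  then show ?thesis
    using rrefl_in_roots[OF assms assms] by (simp add: rrefl_self)
qed

lemma roots_subset_span_base: "\<Phi> \<subseteq> span \<Delta>"
proof
  fix b assume "b \<in> \<Phi>"
  then obtain c where "b = (\<Sum>a\<in>\<Delta>. c a *\<^sub>R a)"
    using base unfolding is_base_def by blast
  then show "b \<in> span \<Delta>"
    by (simp add: span_base span_scale span_sum)
qed

lemma coord_base: "a \<in> \<Delta> \<Longrightarrow> coord a d = (if d = a then 1 else 0)"
  by (simp add: representation_basis independent_base)

lemma coord_lincomb:
  assumes "C \<subseteq> \<Delta>" "d \<in> \<Delta>"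
  shows "coord (\<Sum>a\<in>C. c a *\<^sub>R a) d = (if d \<in> C then c d else 0)"
proof -
  have "finite C"
    using assms(1) finite_base finite_subset by blast
  have "coord (\<Sum>a\<in>C. c a *\<^sub>R a) d = (\<Sum>a\<in>C. coord (c a *\<^sub>R a) d)"
    using assms(1) independent_base by (subst representation_sum) (auto intro: span_scale span_base)
  also have "\<dots> = (\<Sum>a\<in>C. c a * coord a d)"
    using assms(1) independent_base by (intro sum.cong) (auto simp: representation_scale span_base)
  also have "\<dots> = (\<Sum>a\<in>C. if a = d then c a else 0)"
    using assms(1) by (intro sum.cong) (auto simp: coord_base)
  finally show ?thesis
    using \<open>finite C\<close> by (simp add: sum.delta')
qed

lemma coord_sum_base: "x \<in> span \<Delta> \<Longrightarrow> (\<Sum>a\<in>\<Delta>. coord x a *\<^sub>R a) = x"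
  by (simp add: sum_representation_eq independent_base finite_base)

lemma coord_eq_0_if_in_span:
  assumes "J \<subseteq> \<Delta>" "x \<in> span J" "a \<notin> J"
  shows "coord x a = 0"
  using assms representation_extend[OF independent_base assms(2,1)] representation_ne_zero by metis

lemma in_span_if_coord_eq_0:
  assumes "J \<subseteq> \<Delta>" "x \<in> span \<Delta>" "\<forall>a\<in>\<Delta> - J. coord x a = 0"
  shows "x \<in> span J"
proof -
  have "(\<Sum>a\<in>\<Delta>. coord x a *\<^sub>R a) = (\<Sum>a\<in>J. coord x a *\<^sub>R a)"
    using assms(1,3) finite_base by (intro sum.mono_neutral_right) auto
  then have "x = (\<Sum>a\<in>J. coord x a *\<^sub>R a)"
    using coord_sum_base[OF assms(2)] by simp
  moreover have "(\<Sum>a\<in>J. coord x a *\<^sub>R a) \<in> span J"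
    by (intro span_sum span_scale span_base)
  ultimately show ?thesis
    by metis
qed

lemma nonneg_comb_coord_nonneg:
  assumes "C \<subseteq> \<Delta>" "nonneg_comb C x" "d \<in> \<Delta>"
  shows "0 \<le> coord x d"
proof -
  obtain c where "\<forall>a\<in>C. 0 \<le> c a" "x = (\<Sum>a\<in>C. c a *\<^sub>R a)"
    using assms(2) unfolding nonneg_comb_def by blast
  then show ?thesis
    using coord_lincomb[OF assms(1,3)] by simp
qed

lemma pos_roots_iff_coord: "b \<in> Pos \<longleftrightarrow> b \<in> \<Phi> \<and> (\<forall>a\<in>\<Delta>. 0 \<le> coord b a)"
proof
  assume "b \<in> Pos"
  then show "b \<in> \<Phi> \<and> (\<forall>a\<in>\<Delta>. 0 \<le> coord b a)"
    unfolding pos_roots_def using nonneg_comb_coord_nonneg[OF order_refl] by blast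
next
  assume b: "b \<in> \<Phi> \<and> (\<forall>a\<in>\<Delta>. 0 \<le> coord b a)"
  then have "b = (\<Sum>a\<in>\<Delta>. coord b a *\<^sub>R a)"
    using coord_sum_base roots_subset_span_base by auto
  with b have "nonneg_comb \<Delta> b"
    unfolding nonneg_comb_def by blast
  with b show "b \<in> Pos"
    unfolding pos_roots_def by blast
qed

lemma root_coord_sign:
  assumes "b \<in> \<Phi>"
  shows "(\<forall>a\<in>\<Delta>. 0 \<le> coord b a) \<or> (\<forall>a\<in>\<Delta>. coord b a \<le> 0)"
proof -
  obtain c where "(\<forall>a\<in>\<Delta>. 0 \<le> c a) \<or> (\<forall>a\<in>\<Delta>. c a \<le> 0)" "b = (\<Sum>a\<in>\<Delta>. c a *\<^sub>R a)"
    using assms base unfolding is_base_def by blast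
  then show ?thesis
    using coord_lincomb[OF order_refl] by simp
qed

lemma coord_uminus: "x \<in> span \<Delta> \<Longrightarrow> coord (- x) a = - coord x a"
  by (simp add: representation_neg independent_base)

lemma pos_root_if_coord_pos:
  assumes "b \<in> \<Phi>" "a \<in> \<Delta>" "0 < coord b a"
  shows "b \<in> Pos"
proof -
  have "\<not> (\<forall>a\<in>\<Delta>. coord b a \<le> 0)"
    using assms(2,3) by force
  then show ?thesis
    using root_coord_sign[OF assms(1)] assms(1) pos_roots_iff_coord by blast
qed

lemma root_pos_or_neg:
  assumes "b \<in> \<Phi>"
  shows "b \<in> Pos \<or> - b \<in> Pos"
proof -
  have "b \<in> span \<Delta>"
    using assms roots_subset_span_base by blast
  then have "(\<forall>a\<in>\<Delta>. 0 \<le> coord b a) \<or> (\<forall>a\<in>\<Delta>. 0 \<le> coord (- b) a)"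
    using root_coord_sign[OF assms] by (simp add: coord_uminus)
  then show ?thesis
    unfolding pos_roots_iff_coord using assms uminus_in_roots by blast
qed

lemma pos_root_not_neg: "b \<in> Pos \<Longrightarrow> - b \<notin> Pos"
proof
  assume b: "b \<in> Pos" "- b \<in> Pos"
  then have "b \<in> span \<Delta>" "b \<in> \<Phi>"
    using pos_roots_iff_coord roots_subset_span_base by auto
  moreover have "\<forall>a\<in>\<Delta>. coord b a = 0"
    using b pos_roots_iff_coord coord_uminus[OF \<open>b \<in> span \<Delta>\<close>] by force
  ultimately have "b = 0"
    using coord_sum_base by force
  then show False
    using \<open>b \<in> \<Phi>\<close> zero_notin_roots by simp
qed

lemma base_subset_pos_roots: "\<Delta> \<subseteq> Pos"
  using pos_roots_iff_coord coord_base base_subset_roots by auto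

lemma pos_roots_subset:
  assumes "\<Phi>' \<subseteq> \<Phi>" "C \<subseteq> \<Delta>"
  shows "pos_roots \<Phi>' C \<subseteq> Pos"
  using assms nonneg_comb_coord_nonneg pos_roots_iff_coord unfolding pos_roots_def by blast

lemma coord_ge_1_if_root_le:
  assumes "E \<subseteq> \<Delta>" "a \<in> E" "root_le E a b" "b \<in> span \<Delta>"
  shows "1 \<le> coord b a"
proof -
  have a: "a \<in> \<Delta>" "a \<in> span \<Delta>"
    using assms(1,2) span_base by auto
  have "0 \<le> coord (b - a) a"
    using nonneg_comb_coord_nonneg assms a unfolding root_le_def by blast
  moreover have "coord (b - a) a = coord b a - 1"
    using a assms(4) by (simp add: representation_diff independent_base coord_base)
  ultimately show ?thesis
    by simp
qed

lemma weyl_word_in_roots: "set xs \<subseteq> \<Delta> \<Longrightarrow> b \<in> \<Phi> \<Longrightarrow> weyl_word xs b \<in> \<Phi>"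
  using base_subset_roots by (induction xs) (auto simp: weyl_word_Cons_apply rrefl_in_roots)

lemma weyl_word_inner_base: "set xs \<subseteq> \<Delta> \<Longrightarrow> weyl_word xs x \<bullet> weyl_word xs y = x \<bullet> y"
  using weyl_word_inner zero_notin_base by blast

lemma coord_weyl_word_outside:
  assumes "set xs \<subseteq> K" "K \<subseteq> \<Delta>" "x \<in> span \<Delta>" "d \<in> \<Delta> - K"
  shows "coord (weyl_word xs x) d = coord x d"
proof -
  have "weyl_word xs x - x \<in> span K"
    using assms(1) by (rule weyl_word_minus_in_span)
  then have "coord (weyl_word xs x - x) d = 0"
    using assms(2,4) coord_eq_0_if_in_span by blast
  moreover have "weyl_word xs x \<in> span \<Delta>"
    using assms(1-3) weyl_word_in_span[of xs \<Delta> x] by auto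
  ultimately show ?thesis
    using assms(3) by (simp add: representation_diff independent_base)
qed

lemma rrefl_simple_pos_root:
  assumes a: "a \<in> \<Delta>" and b: "b \<in> Pos" "b \<noteq> a"
  shows "rrefl a b \<in> Pos \<and> rrefl a b \<noteq> a"
proof -
  have b_root: "b \<in> \<Phi>" "b \<in> span \<Delta>"
    using b pos_roots_iff_coord roots_subset_span_base by auto
  have "\<exists>d\<in>\<Delta>. d \<noteq> a \<and> 0 < coord b d"
  proof (rule ccontr)
    assume "\<not> ?thesis"
    then have "\<forall>d\<in>\<Delta> - {a}. coord b d = 0"
      using b pos_roots_iff_coord by force
    then have "b \<in> span {a}"
      using in_span_if_coord_eq_0[of "{a}" b] a b_root by auto
    then obtain c where "b = c *\<^sub>R a"
      by (auto simp: span_singleton)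
    then have "c = 1 \<or> c = -1"
      using roots_reduced a base_subset_roots b_root by blast
    then show False
      using \<open>b = c *\<^sub>R a\<close> b a base_subset_pos_roots pos_root_not_neg by auto
  qed
  then obtain d where d: "d \<in> \<Delta>" "d \<noteq> a" "0 < coord b d"
    by blast
  have "coord (rrefl a b) d = coord b d"
    using coord_weyl_word_outside[of "[a]" "{a}" b d] a d b_root by (simp add: weyl_word_Cons_apply)
  moreover have "rrefl a b \<in> \<Phi>"
    using rrefl_in_roots a base_subset_roots b_root by blast
  ultimately show ?thesis
    using pos_root_if_coord_pos d coord_base[OF a] by auto
qed

text \<open>If \<open>s\<^sub>a\<close> and \<open>s\<^sub>b\<close> commute then \<open>s\<^sub>b a\<close> is negated by \<open>s\<^sub>a\<close>, hence a multiple of \<open>a\<close>;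
  this makes \<open>b\<close> a multiple of \<open>a\<close> unless \<open>a \<bullet> b = 0\<close>.\<close>
lemma base_orthogonal_if_not_dyn_edge:
  assumes a: "a \<in> \<Delta>" and b: "b \<in> \<Delta>" and "a \<noteq> b" "\<not> dyn_edge a b"
  shows "a \<bullet> b = 0"
proof (rule ccontr)
  assume ab: "a \<bullet> b \<noteq> 0"
  have a0: "a \<noteq> 0" and b0: "b \<noteq> 0"
    using a b zero_notin_base by auto
  let ?u = "rrefl b a"
  have "rrefl a \<circ> rrefl b = rrefl b \<circ> rrefl a"
    using assms(3,4) unfolding dyn_edge_def by blast
  then have "rrefl a ?u = rrefl b (- a)"
    using rrefl_self[OF a0] by (metis comp_apply)
  also have "\<dots> = - ?u"
    using linear_rrefl by (rule linear_neg)
  finally have "rrefl a ?u - ?u = (- 2) *\<^sub>R ?u"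
    by (simp add: scaleR_2)
  then have "(- 1 / 2) *\<^sub>R (rrefl a ?u - ?u) = ?u"
    by simp
  then have "?u \<in> span {a}"
    using span_scale[OF rrefl_minus_in_span] by metis
  then have "a - ?u \<in> span {a}"
    using span_diff span_base by blast
  moreover have "a - ?u = (2 * (a \<bullet> b) / (b \<bullet> b)) *\<^sub>R b"
    unfolding rrefl_def by simp
  ultimately have "b \<in> span {a}"
    using ab b0 span_scale[of _ _ "(b \<bullet> b) / (2 * (a \<bullet> b))"] by fastforce
  moreover have "b \<notin> span (\<Delta> - {b})"
    using independent_base b unfolding dependent_def by blast
  moreover have "span {a} \<subseteq> span (\<Delta> - {b})"
    using a assms(3) by (intro span_mono) blast
  ultimately show False
    by blast
qed

section \<open>Inversion sets and Coxeter length\<close>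

lemma simple_in_inv_set_snoc_iff:
  assumes "set xs \<subseteq> \<Delta>" "a \<in> \<Delta>"
  shows "a \<in> Inv (weyl_word (xs @ [a])) \<longleftrightarrow> a \<notin> Inv (weyl_word xs)"
proof -
  have "a \<noteq> 0"
    using assms(2) zero_notin_base by blast
  then have "weyl_word (xs @ [a]) a = - weyl_word xs a"
    by (simp add: weyl_word_snoc_apply rrefl_self weyl_word_uminus)
  moreover have "weyl_word xs a \<in> \<Phi>"
    using assms weyl_word_in_roots base_subset_roots by blast
  ultimately show ?thesis
    using assms(2) base_subset_pos_roots root_pos_or_neg pos_root_not_neg
    unfolding inv_set_def by auto
qed

lemma rrefl_simple_pos_roots_iff:
  assumes "a \<in> \<Delta>"
  shows "rrefl a c \<in> Pos - {a} \<longleftrightarrow> c \<in> Pos - {a}"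
  using rrefl_simple_pos_root[OF assms] rrefl_rrefl[of a c] assms zero_notin_base by force

lemma inv_set_snoc_minus_simple:
  assumes "set xs \<subseteq> \<Delta>" "a \<in> \<Delta>"
  shows "Inv (weyl_word (xs @ [a])) - {a} = rrefl a ` (Inv (weyl_word xs) - {a})"
proof -
  have a0: "a \<noteq> 0"
    using assms(2) zero_notin_base by blast
  have iff: "c \<in> Inv (weyl_word (xs @ [a])) - {a} \<longleftrightarrow> rrefl a c \<in> Inv (weyl_word xs) - {a}" for c
  proof -
    have "c \<in> Inv (weyl_word (xs @ [a])) \<longleftrightarrow> c \<in> Pos \<and> - weyl_word xs (rrefl a c) \<in> Pos"
      by (simp add: inv_set_def weyl_word_snoc_apply)
    moreover have "rrefl a c \<in> Inv (weyl_word xs) \<longleftrightarrow> rrefl a c \<in> Pos \<and> - weyl_word xs (rrefl a c) \<in> Pos"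
      by (simp add: inv_set_def)
    ultimately show ?thesis
      using rrefl_simple_pos_roots_iff[OF assms(2), of c] by blast
  qed
  show ?thesis
  proof (intro set_eqI iffI)
    fix c
    assume "c \<in> Inv (weyl_word (xs @ [a])) - {a}"
    then show "c \<in> rrefl a ` (Inv (weyl_word xs) - {a})"
      using iff rrefl_rrefl[OF a0, of c] by (metis image_eqI)
  next
    fix c
    assume "c \<in> rrefl a ` (Inv (weyl_word xs) - {a})"
    then show "c \<in> Inv (weyl_word (xs @ [a])) - {a}"
      using iff rrefl_rrefl[OF a0] by auto
  qed
qed

lemma finite_inv_set: "finite (Inv w)"
proof -
  have "Inv w \<subseteq> \<Phi>"
    unfolding inv_set_def pos_roots_def by blast
  then show ?thesis
    using finite_roots finite_subset by blast
qed

lemma card_inv_set_snoc: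
  assumes xs: "set xs \<subseteq> \<Delta>" and a: "a \<in> \<Delta>" and pos: "weyl_word xs a \<in> Pos"
  shows "card (Inv (weyl_word (xs @ [a]))) = card (Inv (weyl_word xs)) + 1"
proof -
  have "a \<noteq> 0"
    using a zero_notin_base by blast
  then have "inj_on (rrefl a) (Inv (weyl_word xs) - {a})"
    by (intro inj_on_inverseI[where g = "rrefl a"]) (simp add: rrefl_rrefl)
  then have "card (Inv (weyl_word (xs @ [a])) - {a}) = card (Inv (weyl_word xs) - {a})"
    unfolding inv_set_snoc_minus_simple[OF xs a] by (rule card_image)
  moreover have "a \<notin> Inv (weyl_word xs)"
    using pos pos_root_not_neg unfolding inv_set_def by blast
  then have "card (Inv (weyl_word xs) - {a}) = card (Inv (weyl_word xs))"
    by simp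
  moreover have "a \<in> Inv (weyl_word (xs @ [a]))"
    using simple_in_inv_set_snoc_iff[OF xs a] \<open>a \<notin> Inv (weyl_word xs)\<close> by blast
  then have "card (Inv (weyl_word (xs @ [a]))) = Suc (card (Inv (weyl_word (xs @ [a])) - {a}))"
    by (rule card.remove[OF finite_inv_set])
  ultimately show ?thesis
    by linarith
qed

lemma deletion_condition:
  assumes "set xs \<subseteq> \<Delta>" "a \<in> \<Delta>" "- weyl_word xs a \<in> Pos"
  shows "\<exists>ys. set ys \<subseteq> set xs \<and> length ys + 1 = length xs \<and> weyl_word ys = weyl_word (xs @ [a])"
  using assms
proof (induction xs)
  case Nil
  then show ?case
    using base_subset_pos_roots pos_root_not_neg by auto
next
  case (Cons x xs)
  have x: "x \<in> \<Delta>" and xs: "set xs \<subseteq> \<Delta>"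
    using Cons.prems by auto
  show ?case
  proof (cases "- weyl_word xs a \<in> Pos")
    case True
    then obtain ys where "set ys \<subseteq> set xs" "length ys + 1 = length xs" "weyl_word ys = weyl_word (xs @ [a])"
      using Cons xs by blast
    then show ?thesis
      by (intro exI[of _ "x # ys"]) (auto simp: weyl_word_Cons)
  next
    case False
    then have pos: "weyl_word xs a \<in> Pos"
      using root_pos_or_neg weyl_word_in_roots xs Cons.prems(2) base_subset_roots by blast
    have "weyl_word xs a = x"
    proof (rule ccontr)
      assume "weyl_word xs a \<noteq> x"
      then have "rrefl x (weyl_word xs a) \<in> Pos"
        using rrefl_simple_pos_root[OF x pos] by blast
      then show False
        using Cons.prems(3) pos_root_not_neg by (simp add: weyl_word_Cons_apply)
    qed
    \<comment> \<open>hence \<open>w s\<^sub>a w\<inverse> = s\<^sub>x\<close>, and the letter \<open>x\<close> cancels\<close>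
    then have "weyl_word xs (rrefl a y) = rrefl x (weyl_word xs y)" for y
      using rrefl_conjugate[OF linear_weyl_word weyl_word_inner_base[OF xs]] by simp
    moreover have "x \<noteq> 0"
      using x zero_notin_base by blast
    ultimately have "weyl_word (x # xs @ [a]) y = weyl_word xs y" for y
      by (simp add: weyl_word_Cons_apply weyl_word_snoc_apply rrefl_rrefl)
    then show ?thesis
      by (intro exI[of _ xs]) auto
  qed
qed

lemma card_inv_set_reduced_word:
  assumes "set xs \<subseteq> J" "J \<subseteq> \<Delta>" "length xs = cox_length J (weyl_word xs)"
  shows "card (Inv (weyl_word xs)) = length xs"
  using assms
proof (induction xs rule: rev_induct)
  case Nil
  have "Inv (weyl_word []) = {}"
    using pos_root_not_neg unfolding inv_set_def by auto
  then show ?case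
    by (metis card.empty list.size(3))
next
  case (snoc a xs)
  have xs: "set xs \<subseteq> J" "set xs \<subseteq> \<Delta>" and a: "a \<in> J" "a \<in> \<Delta>"
    using snoc.prems by auto
  have "length xs = cox_length J (weyl_word xs)"
    using snoc.prems(1,3) by (rule reduced_word_butlast)
  moreover have "weyl_word xs a \<in> Pos"
  proof (rule ccontr)
    assume "weyl_word xs a \<notin> Pos"
    then have "- weyl_word xs a \<in> Pos"
      using root_pos_or_neg weyl_word_in_roots xs(2) a(2) base_subset_roots by blast
    then obtain ys where "set ys \<subseteq> set xs" "length ys + 1 = length xs"
        "weyl_word ys = weyl_word (xs @ [a])"
      using deletion_condition xs(2) a(2) by blast
    then have "cox_length J (weyl_word (xs @ [a])) < length (xs @ [a])"
      using cox_length_le[of ys J] xs(1) by fastforce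
    then show False
      using snoc.prems(3) by simp
  qed
  ultimately show ?case
    using card_inv_set_snoc[OF xs(2) a(2)] snoc.IH[OF xs(1) snoc.prems(2)] by simp
qed

lemma card_inv_set_eq_cox_length:
  assumes "w \<in> parabolic J" "J \<subseteq> \<Delta>"
  shows "card (Inv w) = cox_length J w"
proof -
  obtain xs where "set xs \<subseteq> J" "length xs = cox_length J w" "weyl_word xs = w"
    using cox_length_attained[OF assms(1)] .
  then show ?thesis
    using card_inv_set_reduced_word[of xs J] assms(2) by simp
qed

end

section \<open>Longest elements of parabolic subgroups\<close>

definition is_longest :: "'a::euclidean_space set \<Rightarrow> ('a \<Rightarrow> 'a) \<Rightarrow> bool" where
  "is_longest J w \<longleftrightarrow> w \<in> parabolic J \<and> (\<forall>v\<in>parabolic J. cox_length J v \<le> cox_length J w)"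

context root_base
begin

lemma weyl_word_negates_pos_roots_in_span:
  assumes xs: "set xs \<subseteq> \<Delta>" and J: "J \<subseteq> \<Delta>" and neg: "\<forall>a\<in>J. - weyl_word xs a \<in> Pos"
    and b: "b \<in> Pos" "b \<in> span J"
  shows "- weyl_word xs b \<in> Pos"
proof -
  let ?w = "weyl_word xs"
  have b_root: "b \<in> \<Phi>" "b \<in> span \<Delta>"
    using b(1) pos_roots_iff_coord roots_subset_span_base by auto
  have neg_span: "- ?w d \<in> span \<Delta>" if "d \<in> \<Delta>" for d
    using that xs base_subset_roots weyl_word_in_roots uminus_in_roots roots_subset_span_base by blast
  have "?w b = ?w (\<Sum>d\<in>\<Delta>. coord b d *\<^sub>R d)"
    using coord_sum_base[OF b_root(2)] by simp
  also have "\<dots> = (\<Sum>d\<in>\<Delta>. coord b d *\<^sub>R ?w d)"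
    by (simp add: linear_sum[OF linear_weyl_word] linear_scale[OF linear_weyl_word])
  finally have sum_eq: "- ?w b = (\<Sum>d\<in>\<Delta>. coord b d *\<^sub>R (- ?w d))"
    by (simp add: sum_negf)
  have "coord (- ?w b) = (\<lambda>e. \<Sum>d\<in>\<Delta>. coord (coord b d *\<^sub>R (- ?w d)) e)"
    unfolding sum_eq using independent_base by (rule representation_sum) (intro span_scale neg_span)
  also have "\<dots> = (\<lambda>e. \<Sum>d\<in>\<Delta>. coord b d * coord (- ?w d) e)"
    by (intro ext sum.cong refl) (simp only: representation_scale[OF independent_base neg_span])
  finally have coord_neg: "coord (- ?w b) e = (\<Sum>d\<in>\<Delta>. coord b d * coord (- ?w d) e)" for e
    by simp
  moreover have "0 \<le> coord b d * coord (- ?w d) e" if "d \<in> \<Delta>" "e \<in> \<Delta>" for d e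
  proof (cases "d \<in> J")
    case True
    then show ?thesis
      using b(1) neg that pos_roots_iff_coord by simp
  next
    case False
    then show ?thesis
      using coord_eq_0_if_in_span[OF J b(2)] by simp
  qed
  moreover have "- ?w b \<in> \<Phi>"
    using xs b_root weyl_word_in_roots uminus_in_roots by blast
  ultimately show ?thesis
    unfolding pos_roots_iff_coord coord_neg by (simp add: sum_nonneg)
qed

lemma inv_set_parabolic_subset_span:
  assumes "set xs \<subseteq> J" "J \<subseteq> \<Delta>"
  shows "Inv (weyl_word xs) \<subseteq> span J"
proof
  fix b
  assume b: "b \<in> Inv (weyl_word xs)"
  then have b_root: "b \<in> Pos" "b \<in> \<Phi>" "b \<in> span \<Delta>"
    using pos_roots_iff_coord roots_subset_span_base unfolding inv_set_def by auto
  show "b \<in> span J"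
  proof (rule in_span_if_coord_eq_0[OF assms(2) b_root(3)], rule ccontr)
    assume "\<not> (\<forall>d\<in>\<Delta> - J. coord b d = 0)"
    then obtain d where d: "d \<in> \<Delta> - J" "coord b d \<noteq> 0"
      by blast
    moreover have "0 \<le> coord b d"
      using b_root(1) d(1) unfolding pos_roots_iff_coord by blast
    ultimately have d: "d \<in> \<Delta> - J" "0 < coord b d"
      by auto
    then have "0 < coord (weyl_word xs b) d"
      using coord_weyl_word_outside[OF assms b_root(3)] by simp
    then have "weyl_word xs b \<in> Pos"
      using pos_root_if_coord_pos assms weyl_word_in_roots b_root(2) d(1) by blast
    then show False
      using b pos_root_not_neg unfolding inv_set_def by blast
  qed
qed

lemma parabolic_eq_id_if_inv_set_empty:
  assumes "v \<in> parabolic J" "J \<subseteq> \<Delta>" "Inv v = {}"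
  shows "v = id"
proof -
  obtain zs where "set zs \<subseteq> J" "length zs = cox_length J v" "weyl_word zs = v"
    using cox_length_attained[OF assms(1)] .
  moreover have "cox_length J v = 0"
    using card_inv_set_eq_cox_length[OF assms(1,2)] assms(3) by simp
  ultimately show ?thesis
    by simp
qed

lemma is_longest_negates_simple_roots:
  assumes J: "J \<subseteq> \<Delta>" and w: "is_longest J w" and a: "a \<in> J"
  shows "- w a \<in> Pos"
proof (rule ccontr)
  assume "- w a \<notin> Pos"
  obtain xs where xs: "set xs \<subseteq> J" "w = weyl_word xs"
    using w unfolding is_longest_def parabolic_def by blast
  then have "w a \<in> Pos"
    using \<open>- w a \<notin> Pos\<close> root_pos_or_neg weyl_word_in_roots J a base_subset_roots by blast
  then have "card (Inv (weyl_word (xs @ [a]))) = card (Inv w) + 1"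
    using card_inv_set_snoc[of xs a] xs J a by auto
  moreover have "weyl_word (xs @ [a]) \<in> parabolic J"
    using xs(1) a by (intro weyl_word_in_parabolic) simp
  then have "card (Inv (weyl_word (xs @ [a]))) \<le> card (Inv w)"
    using w J card_inv_set_eq_cox_length unfolding is_longest_def by metis
  ultimately show False
    by simp
qed

lemma is_longest_negates_pos_roots:
  assumes "J \<subseteq> \<Delta>" "is_longest J w" "b \<in> Pos" "b \<in> span J"
  shows "- w b \<in> Pos"
proof -
  obtain xs where "set xs \<subseteq> J" "w = weyl_word xs"
    using assms(2) unfolding is_longest_def parabolic_def by blast
  then show ?thesis
    using weyl_word_negates_pos_roots_in_span[of xs J b] assms is_longest_negates_simple_roots by auto
qed

lemma is_longest_exists:
  assumes "J \<subseteq> \<Delta>"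
  shows "\<exists>w. is_longest J w"
proof -
  let ?L = "cox_length J ` parabolic J"
  have "cox_length J v \<le> card \<Phi>" if v: "v \<in> parabolic J" for v
  proof -
    have "Inv v \<subseteq> \<Phi>"
      unfolding inv_set_def pos_roots_def by blast
    then have "card (Inv v) \<le> card \<Phi>"
      by (rule card_mono[OF finite_roots])
    then show ?thesis
      using card_inv_set_eq_cox_length[OF v assms] by simp
  qed
  then have "?L \<subseteq> {..card \<Phi>}"
    by (intro image_subsetI) simp
  then have "finite ?L"
    using finite_subset by blast
  moreover have "?L \<noteq> {}"
    using id_in_parabolic by blast
  ultimately have "Max ?L \<in> ?L"
    by (rule Max_in)
  then obtain w where w: "w \<in> parabolic J" "cox_length J w = Max ?L"
    by (metis imageE)
  have "cox_length J v \<le> cox_length J w" if "v \<in> parabolic J" for v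
    using Max_ge[OF \<open>finite ?L\<close> imageI[OF that]] w(2) by simp
  with w(1) show ?thesis
    unfolding is_longest_def by blast
qed

lemma inv_set_longest_quotient_empty:
  assumes J: "J \<subseteq> \<Delta>" and xs: "set xs \<subseteq> J" "is_longest J (weyl_word xs)"
    and ys: "set ys \<subseteq> J" "is_longest J (weyl_word ys)"
  shows "Inv (weyl_word (rev xs @ ys)) = {}"
proof (rule ccontr)
  let ?v = "weyl_word (rev xs @ ys)"
  assume "Inv ?v \<noteq> {}"
  then obtain b where b: "b \<in> Inv ?v"
    by blast
  then have "b \<in> span J"
    using inv_set_parabolic_subset_span[of "rev xs @ ys" J] xs ys J by auto
  \<comment> \<open>With \<open>w = weyl_word xs\<close>, \<open>w' = weyl_word ys\<close> and \<open>v = w\<inverse> w'\<close>: \<open>w'\<close> sends \<open>b\<close> to a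
    negative root \<open>c\<close>, so \<open>-v b\<close> is a positive root of \<open>span J\<close> that \<open>w\<close> sends to the positive \<open>-c\<close>.\<close>
  then have "- weyl_word ys b \<in> Pos"
    using is_longest_negates_pos_roots[OF J ys(2)] b unfolding inv_set_def by blast
  moreover have "- ?v b \<in> span J"
    using weyl_word_in_span[of ys J b] weyl_word_in_span[of "rev xs" J] xs ys \<open>b \<in> span J\<close>
    by (simp add: weyl_word_append span_neg)
  then have "- weyl_word xs (- ?v b) \<in> Pos"
    using is_longest_negates_pos_roots[OF J xs(2)] b unfolding inv_set_def by blast
  moreover have "0 \<notin> set xs"
    using xs(1) J zero_notin_base by blast
  then have "weyl_word xs (- ?v b) = - weyl_word ys b"
    by (simp add: weyl_word_append weyl_word_uminus weyl_word_rev_inverse)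
  ultimately show False
    using pos_root_not_neg by auto
qed

lemma is_longest_unique:
  assumes J: "J \<subseteq> \<Delta>" and w: "is_longest J w" and w': "is_longest J w'"
  shows "w' = w"
proof -
  obtain xs where xs: "set xs \<subseteq> J" "w = weyl_word xs"
    using w unfolding is_longest_def parabolic_def by blast
  obtain ys where ys: "set ys \<subseteq> J" "w' = weyl_word ys"
    using w' unfolding is_longest_def parabolic_def by blast
  have "weyl_word (rev xs @ ys) \<in> parabolic J"
    using xs(1) ys(1) by (intro weyl_word_in_parabolic) auto
  then have "weyl_word (rev xs @ ys) = id"
    using parabolic_eq_id_if_inv_set_empty J inv_set_longest_quotient_empty[OF J] xs ys w w' by blast
  moreover have "0 \<notin> set xs"
    using xs(1) J zero_notin_base by blast
  ultimately show ?thesis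
    using weyl_word_rev_inverse[of xs] xs(2) ys(2) by (metis comp_apply id_apply weyl_word_append ext)
qed

lemma longest_is_longest: "J \<subseteq> \<Delta> \<Longrightarrow> is_longest J (longest J)"
  unfolding longest_def is_longest_def[symmetric]
  using is_longest_exists is_longest_unique by (metis theI)

lemma longest_word:
  assumes "J \<subseteq> \<Delta>"
  obtains ys where "set ys \<subseteq> J" "longest J = weyl_word ys"
  using longest_is_longest[OF assms] unfolding is_longest_def parabolic_def by blast

lemma longest_negates_pos_roots: "J \<subseteq> \<Delta> \<Longrightarrow> b \<in> Pos \<Longrightarrow> b \<in> span J \<Longrightarrow> - longest J b \<in> Pos"
  using longest_is_longest is_longest_negates_pos_roots by blast

lemma longest_sign_flip:
  assumes J: "J \<subseteq> \<Delta>" and c: "c \<in> \<Phi>" "c \<in> span J"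
  shows "- longest J c \<in> Pos \<longleftrightarrow> - c \<notin> Pos"
proof (cases "- c \<in> Pos")
  case True
  obtain ys where ys: "longest J = weyl_word ys"
    using longest_word[OF J] by blast
  have "- longest J (- c) \<in> Pos"
    using longest_negates_pos_roots[OF J True] c(2) span_neg by blast
  then have "longest J c \<in> Pos"
    unfolding ys weyl_word_uminus by simp
  then show ?thesis
    using True pos_root_not_neg by blast
next
  case False
  then have "c \<in> Pos"
    using root_pos_or_neg c(1) by blast
  then show ?thesis
    using longest_negates_pos_roots[OF J _ c(2)] False by blast
qed

section \<open>Products over nested sets\<close>

lemma nested_product_word:
  assumes "\<forall>J\<in>set Js. J \<subseteq> K" "K \<subseteq> \<Delta>"
  obtains xs where "set xs \<subseteq> K" "nested_product Js = weyl_word xs"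
proof -
  have "\<exists>xs. set xs \<subseteq> K \<and> nested_product Js = weyl_word xs"
    using assms(1)
  proof (induction Js)
    case Nil
    show ?case
      by (intro exI[of _ "[]"]) simp
  next
    case (Cons J Js)
    then obtain xs where xs: "set xs \<subseteq> K" "nested_product Js = weyl_word xs"
      by auto
    have "J \<subseteq> \<Delta>"
      using Cons.prems assms(2) by auto
    then obtain ys where ys: "set ys \<subseteq> J" "longest J = weyl_word ys"
      by (rule longest_word)
    have "nested_product (J # Js) = weyl_word (ys @ xs)"
      using xs(2) ys(2) by (simp add: nested_product_Cons weyl_word_append)
    moreover have "set (ys @ xs) \<subseteq> K"
      using xs(1) ys(1) Cons.prems by auto
    ultimately show ?case
      by blast
  qed
  then show ?thesis
    using that by blast
qed

lemma nested_product_on_span: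
  assumes C: "C \<subseteq> \<Delta>"
    and Js: "\<forall>J\<in>set Js. J \<subseteq> \<Delta> \<and> (J \<subseteq> C \<or> (\<forall>x\<in>J. \<forall>y\<in>C. x \<bullet> y = 0))"
    and b: "b \<in> span C"
  shows "nested_product Js b = nested_product (filter (\<lambda>J. J \<subseteq> C) Js) b"
  using Js
proof (induction Js)
  case (Cons J Js)
  let ?y = "nested_product Js b"
  have IH: "?y = nested_product (filter (\<lambda>J. J \<subseteq> C) Js) b"
    using Cons by simp
  show ?case
  proof (cases "J \<subseteq> C")
    case True
    then show ?thesis
      using IH by (simp add: nested_product_Cons)
  next
    case False
    then have J: "J \<subseteq> \<Delta>" "\<forall>x\<in>J. \<forall>y\<in>C. x \<bullet> y = 0"
      using Cons.prems by auto
    obtain xs where "set xs \<subseteq> C" "nested_product (filter (\<lambda>J. J \<subseteq> C) Js) = weyl_word xs"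
      using nested_product_word[of "filter (\<lambda>J. J \<subseteq> C) Js" C] C by auto
    then have "?y \<in> span C"
      using IH weyl_word_in_span b by simp
    then have "\<forall>a\<in>J. ?y \<bullet> a = 0"
      using J(2) orthogonal_to_span[of ?y C] by (simp add: orthogonal_def inner_commute)
    moreover obtain zs where "set zs \<subseteq> J" "longest J = weyl_word zs"
      using J(1) by (rule longest_word)
    ultimately have "longest J ?y = ?y"
      using weyl_word_fixes_orthogonal by simp
    then show ?thesis
      using IH False by (simp add: nested_product_Cons)
  qed
qed simp

lemma connected_subset_component_or_orthogonal:
  assumes C: "C \<in> dyn_components E" and E: "E \<subseteq> \<Delta>" and J: "J \<subseteq> E" "dyn_connected J"
  shows "J \<subseteq> C \<or> (\<forall>x\<in>J. \<forall>y\<in>C. x \<bullet> y = 0)"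
proof (cases "\<exists>x\<in>J. \<exists>y\<in>C. x = y \<or> dyn_edge x y")
  case True
  then show ?thesis
    using dyn_components_absorb[OF C J] by blast
next
  case False
  have "C \<subseteq> E"
    using C by (rule dyn_components_subset)
  then have "x \<bullet> y = 0" if "x \<in> J" "y \<in> C" for x y
    using False that J(1) E base_orthogonal_if_not_dyn_edge by blast
  then show ?thesis
    by blast
qed

lemma sep_set_nested_product_component:
  assumes E: "E \<subseteq> \<Delta>" and ns: "nested_set E N" and mo: "monotonic_order Js N"
    and C: "C \<in> dyn_components E"
    and sep: "sep_set (\<Phi> \<inter> span C) C (Inv (nested_product (filter (\<lambda>J. J \<subseteq> C) Js)))"
  shows "sep_set (\<Phi> \<inter> span E \<inter> span C) C (Inv (nested_product Js) \<inter> span C)"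
proof -
  have "C \<subseteq> E"
    using C by (rule dyn_components_subset)
  then have "span C \<subseteq> span E"
    by (rule span_mono)
  have factors: "\<forall>J\<in>set Js. J \<subseteq> \<Delta> \<and> (J \<subseteq> C \<or> (\<forall>x\<in>J. \<forall>y\<in>C. x \<bullet> y = 0))"
  proof
    fix J
    assume "J \<in> set Js"
    then have "J \<subseteq> E" "dyn_connected J"
      using nested_set_member[OF ns] monotonic_order_set[OF mo] by auto
    then show "J \<subseteq> \<Delta> \<and> (J \<subseteq> C \<or> (\<forall>x\<in>J. \<forall>y\<in>C. x \<bullet> y = 0))"
      using connected_subset_component_or_orthogonal[OF C E] E by blast
  qed
  have "C \<subseteq> \<Delta>"
    using \<open>C \<subseteq> E\<close> E by blast
  have "b \<in> Inv (nested_product Js) \<longleftrightarrow> b \<in> Inv (nested_product (filter (\<lambda>J. J \<subseteq> C) Js))"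
    if "b \<in> span C" for b
    using nested_product_on_span[OF \<open>C \<subseteq> \<Delta>\<close> factors that] unfolding inv_set_def by simp
  then have "(Inv (nested_product Js) \<inter> span C) \<inter> (\<Phi> \<inter> span C) \<inter> span C
      = Inv (nested_product (filter (\<lambda>J. J \<subseteq> C) Js)) \<inter> (\<Phi> \<inter> span C) \<inter> span C"
    by blast
  then have "sep_set (\<Phi> \<inter> span C) C (Inv (nested_product Js) \<inter> span C)"
    by (rule sep_set_cong[OF sep])
  moreover have "\<Phi> \<inter> span E \<inter> span C = \<Phi> \<inter> span C"
    using \<open>span C \<subseteq> span E\<close> by blast
  ultimately show ?thesis
    by simp
qed

text \<open>Elements of \<open>W\<^bsub>E-{a}\<^esub>\<close> do not change the \<open>a\<close>-coordinate.\<close>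
lemma weyl_word_pos_above_simple:
  assumes E: "E \<subseteq> \<Delta>" and a: "a \<in> E" and xs: "set xs \<subseteq> E - {a}"
    and b: "b \<in> pos_roots (\<Phi> \<inter> span E) E" "root_le E a b"
  shows "b \<in> Pos" "weyl_word xs b \<in> Pos"
proof -
  have b_root: "b \<in> \<Phi>" "b \<in> span \<Delta>"
    using b(1) roots_subset_span_base unfolding pos_roots_def by auto
  show "b \<in> Pos"
    using b(1) pos_roots_subset[of "\<Phi> \<inter> span E" E] E by blast
  have "1 \<le> coord b a"
    using coord_ge_1_if_root_le[OF E a b(2) b_root(2)] .
  moreover have "coord (weyl_word xs b) a = coord b a"
    using coord_weyl_word_outside[OF xs _ b_root(2)] E a by blast
  moreover have "weyl_word xs b \<in> \<Phi>"
    using weyl_word_in_roots xs E b_root(1) by blast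
  ultimately show "weyl_word xs b \<in> Pos"
    using pos_root_if_coord_pos[of "weyl_word xs b" a] E a by auto
qed

lemma sep_set_parabolic_extend:
  assumes E: "E \<subseteq> \<Delta>" "dyn_connected E" and a: "a \<in> E" and xs: "set xs \<subseteq> E - {a}"
    and sep: "sep_set (\<Phi> \<inter> span (E - {a})) (E - {a}) (Inv (weyl_word xs))"
  shows "sep_set (\<Phi> \<inter> span E) E (Inv (weyl_word xs))"
proof -
  have "\<Phi> \<inter> span E \<inter> span (E - {a}) = \<Phi> \<inter> span (E - {a})"
    using span_mono[of "E - {a}" E] by blast
  moreover have "sep_set (\<Phi> \<inter> span (E - {a})) (E - {a}) (Inv (weyl_word xs) \<inter> span (E - {a}))"
    by (rule sep_set_cong[OF sep]) blast
  ultimately have "sep_set (\<Phi> \<inter> span E \<inter> span (E - {a})) (E - {a}) (Inv (weyl_word xs) \<inter> span (E - {a}))"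
    by simp
  moreover have "{b \<in> pos_roots (\<Phi> \<inter> span E) E. root_le E a b} \<inter> Inv (weyl_word xs) = {}"
    using weyl_word_pos_above_simple[OF E(1) a xs] pos_root_not_neg unfolding inv_set_def by blast
  ultimately show ?thesis
    using sep_set.S3[OF E(2) a] by blast
qed

text \<open>Left multiplication by \<open>w\<^sub>0(E)\<close> complements the inversion set inside \<open>E - {a}\<close> and inverts
  every root above \<open>a\<close>.\<close>
lemma sep_set_longest_comp:
  assumes E: "E \<subseteq> \<Delta>" "dyn_connected E" and a: "a \<in> E" and xs: "set xs \<subseteq> E - {a}"
    and sep: "sep_set (\<Phi> \<inter> span (E - {a})) (E - {a}) (Inv (weyl_word xs))"
  shows "sep_set (\<Phi> \<inter> span E) E (Inv (longest E \<circ> weyl_word xs))"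
proof -
  let ?E' = "E - {a}" and ?w = "longest E \<circ> weyl_word xs"
  have "\<forall>C\<subseteq>?E'. pos_roots (\<Phi> \<inter> span ?E') C \<subseteq> Pos"
    using E(1) pos_roots_subset by blast
  then have complement: "sep_set (\<Phi> \<inter> span ?E') ?E' (Pos - Inv (weyl_word xs))"
    using sep_set_complement[OF sep] by blast
  have flip: "b \<in> Inv ?w \<longleftrightarrow> b \<in> Pos - Inv (weyl_word xs)" if "b \<in> \<Phi>" "b \<in> span ?E'" for b
  proof -
    have "weyl_word xs b \<in> \<Phi>" "weyl_word xs b \<in> span E"
      using that xs E(1) weyl_word_in_roots weyl_word_in_span span_mono[of ?E' E] by blast+
    then show ?thesis
      using longest_sign_flip[OF E(1)] unfolding inv_set_def by auto
  qed
  have "(Inv ?w \<inter> span ?E') \<inter> (\<Phi> \<inter> span ?E') \<inter> span ?E'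
      = (Pos - Inv (weyl_word xs)) \<inter> (\<Phi> \<inter> span ?E') \<inter> span ?E'"
    using flip by blast
  then have "sep_set (\<Phi> \<inter> span ?E') ?E' (Inv ?w \<inter> span ?E')"
    by (rule sep_set_cong[OF complement])
  moreover have "\<Phi> \<inter> span E \<inter> span ?E' = \<Phi> \<inter> span ?E'"
    using span_mono[of ?E' E] by blast
  moreover have "{b \<in> pos_roots (\<Phi> \<inter> span E) E. root_le E a b} \<subseteq> Inv ?w"
  proof
    fix b
    assume b: "b \<in> {b \<in> pos_roots (\<Phi> \<inter> span E) E. root_le E a b}"
    then have "b \<in> span E"
      unfolding pos_roots_def using pos_roots_subset_span by blast
    then have "weyl_word xs b \<in> span E"
      using xs weyl_word_in_span[of xs E b] by blast
    then show "b \<in> Inv ?w"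
      using weyl_word_pos_above_simple[OF E(1) a xs] b longest_negates_pos_roots[OF E(1)]
      unfolding inv_set_def by auto
  qed
  ultimately show ?thesis
    using sep_set.S3[OF E(2) a] by auto
qed

lemma nested_product_word_of_nested_set:
  assumes "nested_set K N" "monotonic_order Js N" "K \<subseteq> \<Delta>"
  obtains xs where "set xs \<subseteq> K" "nested_product Js = weyl_word xs"
proof -
  have "\<forall>J\<in>set Js. J \<subseteq> K"
    using nested_set_member[OF assms(1)] monotonic_order_set[OF assms(2)] by blast
  then show ?thesis
    using nested_product_word assms(3) that by blast
qed

lemma sep_set_nested_product_connected:
  assumes E: "E \<subseteq> \<Delta>" "dyn_connected E" "card E \<noteq> 1"
    and ns: "nested_set E N" and mo: "monotonic_order Js N"
    and IH: "\<And>E' N' Js'. E' \<subset> E \<Longrightarrow> E' \<noteq> {} \<Longrightarrow> nested_set E' N' \<Longrightarrow> monotonic_order Js' N' \<Longrightarrow>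
      sep_set (\<Phi> \<inter> span E') E' (Inv (nested_product Js'))"
  shows "sep_set (\<Phi> \<inter> span E) E (Inv (nested_product Js))"
proof -
  have "finite E"
    using E(1) finite_base by (rule finite_subset)
  have smaller: "E - {a} \<subset> E" "E - {a} \<subseteq> \<Delta>" "E - {a} \<noteq> {}" if "a \<in> E" for a
  proof -
    show "E - {a} \<subset> E" "E - {a} \<subseteq> \<Delta>"
      using that E(1) by auto
    have "E \<noteq> {a}"
      using E(3) by auto
    then show "E - {a} \<noteq> {}"
      using that by blast
  qed
  show ?thesis
  proof (cases "E \<in> N")
    case True
    then obtain a Js' where a: "a \<in> E" and Js: "Js = E # Js'"
      and ns': "nested_set (E - {a}) (N - {E})" and mo': "monotonic_order Js' (N - {E})"
      using nested_set_remove_top[OF \<open>finite E\<close> E(2) ns mo] by blast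
    obtain xs where "set xs \<subseteq> E - {a}" "nested_product Js' = weyl_word xs"
      using nested_product_word_of_nested_set[OF ns' mo' smaller(2)[OF a]] .
    moreover have "sep_set (\<Phi> \<inter> span (E - {a})) (E - {a}) (Inv (nested_product Js'))"
      using IH[OF smaller(1)[OF a] smaller(3)[OF a] ns' mo'] .
    ultimately show ?thesis
      using sep_set_longest_comp[OF E(1,2) a] unfolding Js nested_product_Cons by simp
  next
    case False
    then obtain a where a: "a \<in> E" and ns': "nested_set (E - {a}) N"
      using nested_set_remove_uncovered[OF \<open>finite E\<close> E(2) ns] by blast
    obtain xs where "set xs \<subseteq> E - {a}" "nested_product Js = weyl_word xs"
      using nested_product_word_of_nested_set[OF ns' mo smaller(2)[OF a]] .
    moreover have "sep_set (\<Phi> \<inter> span (E - {a})) (E - {a}) (Inv (nested_product Js))"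
      using IH[OF smaller(1)[OF a] smaller(3)[OF a] ns' mo] .
    ultimately show ?thesis
      using sep_set_parabolic_extend[OF E(1,2) a] by simp
  qed
qed

lemma sep_set_nested_product:
  assumes "E \<subseteq> \<Delta>" "E \<noteq> {}" "nested_set E N" "monotonic_order Js N"
  shows "sep_set (\<Phi> \<inter> span E) E (Inv (nested_product Js))"
  using assms
proof (induction "card E" arbitrary: E N Js rule: less_induct)
  case less
  note E = less.prems(1,2) and ns = less.prems(3) and mo = less.prems(4)
  have "finite E"
    using E(1) finite_base by (rule finite_subset)
  have IH: "sep_set (\<Phi> \<inter> span E') E' (Inv (nested_product Js'))"
    if "E' \<subset> E" "E' \<noteq> {}" "nested_set E' N'" "monotonic_order Js' N'" for E' N' Js'
    by (rule less.hyps[OF psubset_card_mono[OF \<open>finite E\<close> that(1)] _ that(2-4)])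
      (use that(1) E(1) in blast)
  consider "card E = 1" | "\<not> dyn_connected E" | "dyn_connected E" "card E \<noteq> 1"
    by blast
  then show ?case
  proof cases
    case 1
    then show ?thesis
      by (rule sep_set.S1)
  next
    case 2
    show ?thesis
    proof (rule sep_set.S2[OF E(2) 2], rule ballI)
      fix C
      assume C: "C \<in> dyn_components E"
      have "nested_set C {J \<in> N. J \<subseteq> C}"
        using ns by (rule nested_set_subfamily) auto
      then have "sep_set (\<Phi> \<inter> span C) C (Inv (nested_product (filter (\<lambda>J. J \<subseteq> C) Js)))"
        by (rule IH[OF dyn_components_psubset[OF C 2] _ monotonic_order_filter[OF mo]])
      then show "sep_set (\<Phi> \<inter> span E \<inter> span C) C (Inv (nested_product Js) \<inter> span C)"
        by (rule sep_set_nested_product_component[OF E(1) ns mo C])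
    qed
  next
    case 3
    show ?thesis
      by (rule sep_set_nested_product_connected[OF E(1) 3 ns mo IH])
  qed
qed

end

theorem lemma5p6:
  fixes \<Phi> \<Delta> :: "'a::euclidean_space set" and \<N> :: "'a set set" and Js :: "'a set list"
  assumes "root_system \<Phi>"
    and "is_base \<Phi> \<Delta>"
    and "dyn_connected \<Delta>"
    and "nested_set \<Delta> \<N>"
    and "monotonic_order Js \<N>"
  shows "separable \<Phi> \<Delta> (nested_product Js)"
proof -
  interpret root_base \<Phi> \<Delta>
    using assms(1,2) by unfold_locales
  have "\<Delta> \<noteq> {}"
    using assms(3) unfolding dyn_connected_def by blast
  then have "sep_set (\<Phi> \<inter> span \<Delta>) \<Delta> (Inv (nested_product Js))"
    using sep_set_nested_product[OF order_refl _ assms(4,5)] by blast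
  moreover have "\<Phi> \<inter> span \<Delta> = \<Phi>"
    using roots_subset_span_base by blast
  ultimately show ?thesis
    unfolding separable_def by simp
qed

end
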